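(* Let $\pi\in\mathcal P(\mathbb R^d)$ satisfy the MALA assumption with constants $\mathsf M,\mathsf L,\mathsf m$, and set $\kappa=\mathsf M/\mathsf m$. Let $\mathsf Q$ be the (subgradient) MALA proposal kernel with step size $h$, where $$0<h\le\frac{1}{200}\min\Big\{\frac{1}{d\kappa\mathsf M},\ \frac{1}{d\mathsf L^2}\Big\}.$$ Then $$\inf_{x\in\mathbb R^d}\ \mathbb E_{y\sim\mathsf Q(x,\cdot)}[\alpha(x,y)]\ >\ \frac{13}{20}.$$
   Context: MALA assumption: $\pi$ has a positive density with $\log\pi=f+g$, where $f$ is concave and differentiable with $\|\nabla f(x)-\nabla f(y)\|\le\mathsf M\|x-y\|$, $g$ satisfies $|g(x)-g(y)|\le\mathsf L\|x-y\|$, and $\pi$ is $\mathsf m$-strongly log-concave, i.e. $\log\pi(\lambda x+(1-\lambda)y)\ge\lambda\log\pi(x)+(1-\lambda)\log\pi(y)+\frac{\mathsf m}{2}\lambda(1-\lambda)\|x-y\|^2$ for all $x,y$, $\lambda\in(0,1)$. Superdifferential: $\partial\log\pi(x)=\{v\in\mathbb R^d:\ \log\pi(y)\le\log\pi(x)+v\cdot(y-x)\ \forall y\}$ (nonempty by concavity). Fix any selection $v(x)\in\partial\log\pi(x)$; then $v(x)=\nabla f(x)+v_s(x)$ with $\|v_s(x)\|\le\mathsf L$. The subgradient MALA proposal with step size $h>0$ is $\mathsf Q(x,\cdot)=\mathcal N(x+hv(x),2hI)$, i.e. $x'=x+hv(x)+\sqrt{2h}\,\xi$, $\xi\sim\mathcal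 N(0,I)$. The acceptance probability is $\alpha(x,x')=\min\{1,\frac{\pi(x')\mathsf Q(x',x)}{\pi(x)\mathsf Q(x,x')}\}$. *)

theory Defs
  imports "HOL-Analysis.Analysis"
begin

definition superdiff :: "('a::euclidean_space \<Rightarrow> real) \<Rightarrow> 'a \<Rightarrow> 'a set" where
  "superdiff F x = {w. \<forall>y. F y \<le> F x + w \<bullet> (y - x)}"

text \<open>Density of the subgradient MALA proposal Q(x,.) = N(x + h v(x), 2h I) at y, in dimension DIM('a).\<close>
definition mala_q :: "real \<Rightarrow> ('a::euclidean_space \<Rightarrow> 'a) \<Rightarrow> 'a \<Rightarrow> 'a \<Rightarrow> real" where
  "mala_q h v x y = (4 * pi * h) powr (- real DIM('a) / 2)
      * exp (- (norm (y - x - h *\<^sub>R v x))\<^sup>2 / (4 * h))"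

definition mala_alpha :: "('a::euclidean_space \<Rightarrow> real) \<Rightarrow> real \<Rightarrow> ('a \<Rightarrow> 'a) \<Rightarrow> 'a \<Rightarrow> 'a \<Rightarrow> real" where
  "mala_alpha p h v x y = min 1 ((p y * mala_q h v y x) / (p x * mala_q h v x y))"

definition mala_accept :: "('a::euclidean_space \<Rightarrow> real) \<Rightarrow> real \<Rightarrow> ('a \<Rightarrow> 'a) \<Rightarrow> 'a \<Rightarrow> real" where
  "mala_accept p h v x = integral\<^sup>L lebesgue (\<lambda>y. mala_q h v x y * mala_alpha p h v x y)"

end

theory Submission
  imports Defs "HOL-Probability.Probability"
begin

text \<open>Fix x and put c = x + h v(x), so that Q(x,.) is the normal distribution N(c, 2h I).
  For y ~ Q(x,.), strong concavity of ln p at y, an exact identity for the difference of the two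
  proposal exponents, the bound |v(x) - v(y)| <= M |x - y| + 2 L (v differs from the gradient of
  f by at most L) and two applications of AM-GM bound the log acceptance ratio from below by
  -3/50 - 21/800 |y - c|^2 / (h d). Since min(1, e^R) >= 1 + R for R <= 0 and
  E |y - c|^2 = 2 h d, the expected acceptance probability is at least 47/50 - 21/400 = 71/80,
  uniformly in x.

  The subgradient selection v need not be continuous, so the expectation only makes sense once v
  is known to be measurable: along every line the two one-sided directional derivatives of the
  concave function ln p differ only at countably many points, hence (Fubini) v agrees almost
  everywhere with a Borel function built from right directional derivatives.\<close>

section \<open>Measurability of superdifferential selections\<close>

definition diff_quot :: "('a::real_vector \<Rightarrow> real) \<Rightarrow> 'a \<Rightarrow> 'a \<Rightarrow> real \<Rightarrow> real" where
  "diff_quot F b y r = (F (y + r *\<^sub>R b) - F y) / r"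

text \<open>For concave F the difference quotients are antitone in r, so the following are the
  one-sided directional derivatives of F; for general F they are just sup and inf of quotients.\<close>

definition right_dir_deriv :: "('a::real_vector \<Rightarrow> real) \<Rightarrow> 'a \<Rightarrow> 'a \<Rightarrow> real" where
  "right_dir_deriv F b y = (SUP n. diff_quot F b y (1 / real (Suc n)))"

definition left_dir_deriv :: "('a::real_vector \<Rightarrow> real) \<Rightarrow> 'a \<Rightarrow> 'a \<Rightarrow> real" where
  "left_dir_deriv F b y = (INF n. diff_quot F b y (- (1 / real (Suc n))))"

lemma diff_quot_uminus: "diff_quot F b y (- r) = diff_quot F b (y - r *\<^sub>R b) r"
  unfolding diff_quot_def by (simp add: minus_divide_left)

context
  fixes F :: "'a::euclidean_space \<Rightarrow> real" and v :: "'a \<Rightarrow> 'a"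
  assumes superdiff_sel: "\<forall>x. v x \<in> superdiff F x"
begin

lemma superdiff_selection_le: "F z \<le> F y + v y \<bullet> (z - y)"
  using superdiff_sel unfolding superdiff_def by blast

lemma diff_quot_le_superdiff:
  assumes "0 < r" shows "diff_quot F b y r \<le> v y \<bullet> b"
  using superdiff_selection_le[of "y + r *\<^sub>R b" y] assms
  by (simp add: diff_quot_def divide_le_eq mult.commute)

lemma superdiff_le_diff_quot:
  assumes "r < 0" shows "v y \<bullet> b \<le> diff_quot F b y r"
proof -
  have "F (y + r *\<^sub>R b) - F y \<le> (v y \<bullet> b) * r"
    using superdiff_selection_le[of "y + r *\<^sub>R b" y] by (simp add: mult.commute)
  with assms show ?thesis
    unfolding diff_quot_def by (simp add: neg_le_divide_eq)
qed

lemma superdiff_endpoint_le_diff_quot: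
  assumes "0 < r" shows "v (y + r *\<^sub>R b) \<bullet> b \<le> diff_quot F b y r"
  using superdiff_selection_le[of y "y + r *\<^sub>R b"] assms
  by (simp add: diff_quot_def le_divide_eq mult.commute)

lemma superdiff_antitone_on_line:
  assumes "s \<le> t" shows "v (z + t *\<^sub>R b) \<bullet> b \<le> v (z + s *\<^sub>R b) \<bullet> b"
proof -
  have "F (z + s *\<^sub>R b) \<le> F (z + t *\<^sub>R b) + (s - t) * (v (z + t *\<^sub>R b) \<bullet> b)"
    using superdiff_selection_le[of "z + s *\<^sub>R b" "z + t *\<^sub>R b"] by (simp add: algebra_simps)
  moreover have "F (z + t *\<^sub>R b) \<le> F (z + s *\<^sub>R b) + (t - s) * (v (z + s *\<^sub>R b) \<bullet> b)"
    using superdiff_selection_le[of "z + t *\<^sub>R b" "z + s *\<^sub>R b"] by (simp add: algebra_simps)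
  ultimately have "(t - s) * (v (z + t *\<^sub>R b) \<bullet> b) \<le> (t - s) * (v (z + s *\<^sub>R b) \<bullet> b)"
    by (simp add: algebra_simps)
  with assms show ?thesis
    by (cases "s = t") (auto simp: mult_le_cancel_left)
qed

lemma bdd_above_diff_quot: "bdd_above (range (\<lambda>n. diff_quot F b y (1 / real (Suc n))))"
  by (rule bdd_aboveI2[where M="v y \<bullet> b"], rule diff_quot_le_superdiff) simp

lemma bdd_below_diff_quot: "bdd_below (range (\<lambda>n. diff_quot F b y (- (1 / real (Suc n)))))"
  by (rule bdd_belowI2[where m="v y \<bullet> b"], rule superdiff_le_diff_quot) simp

lemma right_dir_deriv_le_superdiff: "right_dir_deriv F b y \<le> v y \<bullet> b"
  unfolding right_dir_deriv_def by (intro cSUP_least diff_quot_le_superdiff) auto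

lemma superdiff_le_left_dir_deriv: "v y \<bullet> b \<le> left_dir_deriv F b y"
  unfolding left_dir_deriv_def by (intro cINF_greatest superdiff_le_diff_quot) auto

lemma left_dir_deriv_le_right_dir_deriv:
  assumes "s < t"
  shows "left_dir_deriv F b (z + t *\<^sub>R b) \<le> right_dir_deriv F b (z + s *\<^sub>R b)"
proof -
  obtain n :: nat where "2 / (t - s) < real n"
    using reals_Archimedean2 by blast
  define r where "r = 1 / real (Suc n)"
  have "0 < r" by (simp add: r_def)
  have "2 < (t - s) * real (Suc n)"
    using \<open>2 / (t - s) < real n\<close> assms by (simp add: divide_less_eq algebra_simps)
  then have "2 * r < t - s"
    by (simp add: r_def divide_less_eq mult.commute)
  then have "s + r \<le> t - r"
    by linarith
  have "left_dir_deriv F b (z + t *\<^sub>R b) \<le> diff_quot F b (z + t *\<^sub>R b) (- r)"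
    unfolding left_dir_deriv_def r_def by (rule cINF_lower[OF bdd_below_diff_quot]) simp
  also have "\<dots> = diff_quot F b (z + (t - r) *\<^sub>R b) r"
    by (simp add: diff_quot_uminus algebra_simps)
  also have "\<dots> \<le> v (z + (t - r) *\<^sub>R b) \<bullet> b"
    using \<open>0 < r\<close> by (rule diff_quot_le_superdiff)
  also have "\<dots> \<le> v (z + (s + r) *\<^sub>R b) \<bullet> b"
    using \<open>s + r \<le> t - r\<close> by (rule superdiff_antitone_on_line)
  also have "\<dots> \<le> diff_quot F b (z + s *\<^sub>R b) r"
    using superdiff_endpoint_le_diff_quot[OF \<open>0 < r\<close>, of "z + s *\<^sub>R b" b]
    by (simp add: algebra_simps)
  also have "\<dots> \<le> right_dir_deriv F b (z + s *\<^sub>R b)"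
    unfolding right_dir_deriv_def r_def by (rule cSUP_upper[OF _ bdd_above_diff_quot]) simp
  finally show ?thesis .
qed

text \<open>The open intervals between the two one-sided derivatives along a line are pairwise
  disjoint, so choosing a rational in each of them is injective.\<close>
lemma countable_dir_deriv_gap:
  "countable {t. right_dir_deriv F b (z + t *\<^sub>R b) < left_dir_deriv F b (z + t *\<^sub>R b)}"
  (is "countable ?T")
proof -
  define q where "q t = (SOME r. r \<in> \<rat> \<and> right_dir_deriv F b (z + t *\<^sub>R b) < r
    \<and> r < left_dir_deriv F b (z + t *\<^sub>R b))" for t
  have q: "q t \<in> \<rat> \<and> right_dir_deriv F b (z + t *\<^sub>R b) < q t \<and> q t < left_dir_deriv F b (z + t *\<^sub>R b)"
    if "t \<in> ?T" for t
    unfolding q_def by (rule someI_ex) (use that Rats_dense_in_real in blast)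
  have q_less: "q t < q s" if "s \<in> ?T" "t \<in> ?T" "s < t" for s t
    using q[OF that(1)] q[OF that(2)] left_dir_deriv_le_right_dir_deriv[OF \<open>s < t\<close>, where b=b and z=z]
    by linarith
  have "countable (q ` ?T)"
    using q by (intro countable_subset[OF _ countable_rat]) blast
  moreover have "inj_on q ?T"
    by (rule linorder_inj_onI') (use q_less in fastforce)
  ultimately show ?thesis
    by (rule countable_image_inj_on)
qed

end

lemma lborel_null_if_countable_lines:
  fixes S :: "'a::euclidean_space set"
  assumes S: "S \<in> sets borel" and b: "b \<in> Basis"
    and lines: "\<And>z. countable {t. z + t *\<^sub>R b \<in> S}"
  shows "S \<in> null_sets lborel"
proof -
  interpret P: product_sigma_finite "\<lambda>_::'a. lborel :: real measure"
    by standard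
  define T where "T = (\<lambda>f. \<Sum>c\<in>Basis. f c *\<^sub>R c :: 'a)"
  have T_meas[measurable]: "T \<in> borel_measurable (Pi\<^sub>M Basis (\<lambda>_. lborel))"
    unfolding T_def by measurable
  define A where "A = T -` S \<inter> space (Pi\<^sub>M Basis (\<lambda>_. lborel::real measure))"
  have A: "A \<in> sets (Pi\<^sub>M Basis (\<lambda>_. lborel))"
    unfolding A_def using S T_meas by measurable
  have T_upd: "T (x(b := t)) = (\<Sum>c\<in>Basis - {b}. x c *\<^sub>R c) + t *\<^sub>R b" for x t
    unfolding T_def using b by (simp add: sum.remove[of _ b] add.commute)
  have section_null: "(\<integral>\<^sup>+ t. indicator A (x(b := t)) \<partial>lborel) = 0" for x
  proof -
    have "AE t in lborel. t \<notin> {t. (\<Sum>c\<in>Basis - {b}. x c *\<^sub>R c) + t *\<^sub>R b \<in> S}"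
      by (rule AE_not_in[OF countable_imp_null_set_lborel[OF lines]])
    then have "AE t in lborel. indicator A (x(b := t)) = (0::ennreal)"
      by eventually_elim (auto simp: A_def T_upd indicator_def)
    then show ?thesis
      by (simp add: nn_integral_cong_AE)
  qed
  have "emeasure lborel S = emeasure (distr (Pi\<^sub>M Basis (\<lambda>_. lborel)) borel T) S"
    unfolding T_def by (subst lborel_eq) simp
  also have "\<dots> = (\<integral>\<^sup>+x. indicator A x \<partial>(Pi\<^sub>M Basis (\<lambda>_. lborel)))"
    unfolding A_def using S A by (subst emeasure_distr) (auto simp: A_def)
  also have "Basis = insert b (Basis - {b})"
    using b by auto
  also have "(\<integral>\<^sup>+x. indicator A x \<partial>(Pi\<^sub>M (insert b (Basis - {b})) (\<lambda>_. lborel))) =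
      (\<integral>\<^sup>+ x. (\<integral>\<^sup>+ t. indicator A (x(b := t)) \<partial>lborel) \<partial>(Pi\<^sub>M (Basis - {b}) (\<lambda>_. lborel)))"
    by (rule P.product_nn_integral_insert) (use A b in \<open>auto simp: insert_absorb\<close>)
  also have "\<dots> = 0"
    by (simp add: section_null)
  finally show ?thesis
    using S by (simp add: null_sets_def)
qed

lemma superdiff_selection_measurable:
  fixes F :: "'a::euclidean_space \<Rightarrow> real" and v :: "'a \<Rightarrow> 'a"
  assumes F_cont: "continuous_on UNIV F" and sel: "\<forall>x. v x \<in> superdiff F x"
  shows "v \<in> borel_measurable lebesgue"
proof -
  have [measurable]: "F \<in> borel_measurable borel"
    using F_cont by (rule borel_measurable_continuous_onI)
  have [measurable]: "(\<lambda>y. diff_quot F b y r) \<in> borel_measurable borel" for b r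
    unfolding diff_quot_def by measurable
  have [measurable]: "(\<lambda>y. right_dir_deriv F b y) \<in> borel_measurable borel" for b
    unfolding right_dir_deriv_def
    by (rule borel_measurable_cSUP) (simp, measurable, rule bdd_above_diff_quot[OF sel])
  have [measurable]: "(\<lambda>y. left_dir_deriv F b y) \<in> borel_measurable borel" for b
    unfolding left_dir_deriv_def by measurable
  define D where "D y = (\<Sum>b\<in>Basis. right_dir_deriv F b y *\<^sub>R b)" for y
  have "D \<in> borel_measurable borel"
    unfolding D_def by measurable
  then have D_meas: "D \<in> borel_measurable lebesgue"
    by (simp add: measurable_completion)
  define N where "N = (\<Union>b\<in>Basis. {y. right_dir_deriv F b y < left_dir_deriv F b y})"
  have "{y. right_dir_deriv F b y < left_dir_deriv F b y} \<in> null_sets lborel" if "b \<in> Basis" for b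
    by (rule lborel_null_if_countable_lines[OF _ that]) (simp_all add: countable_dir_deriv_gap[OF sel])
  then have "N \<in> null_sets lborel"
    unfolding N_def by (intro null_sets.finite_UN) auto
  then have "AE y in lebesgue. y \<notin> N"
    by (intro AE_completion AE_not_in)
  then have "AE y in lebesgue. D y = v y"
  proof eventually_elim
    case (elim y)
    have "right_dir_deriv F b y = v y \<bullet> b" if "b \<in> Basis" for b
      using elim that right_dir_deriv_le_superdiff[OF sel, of b y] superdiff_le_left_dir_deriv[OF sel, of y b]
      unfolding N_def by force
    then show "D y = v y"
      unfolding D_def by (simp add: euclidean_representation cong: sum.cong)
  qed
  then show ?thesis
    by (rule borel_measurable_AE[OF D_meas])
qed

section \<open>Isotropic normal densities\<close>

lemma norm_power2_eq_sum_Basis: "(norm w)\<^sup>2 = (\<Sum>b\<in>Basis. (w \<bullet> b)\<^sup>2)"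
  unfolding power2_norm_eq_inner by (subst euclidean_inner) (simp add: power2_eq_square)

definition iso_normal_density :: "real \<Rightarrow> 'a::euclidean_space \<Rightarrow> 'a \<Rightarrow> real" where
  "iso_normal_density s c y = (\<Prod>b\<in>Basis. normal_density (c \<bullet> b) s (y \<bullet> b))"

lemma iso_normal_density_nonneg: "0 \<le> iso_normal_density s c y"
  unfolding iso_normal_density_def by (intro prod_nonneg) auto

lemma borel_measurable_iso_normal_density [measurable]:
  "iso_normal_density s c \<in> borel_measurable borel"
  unfolding iso_normal_density_def by measurable

lemma iso_normal_density_sqrt:
  fixes c :: "'a::euclidean_space"
  assumes h: "0 < h"
  shows "iso_normal_density (sqrt (2 * h)) c y =
    (4 * pi * h) powr (- real DIM('a) / 2) * exp (- (norm (y - c))\<^sup>2 / (4 * h))"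
proof -
  have density: "normal_density \<mu> (sqrt (2 * h)) t = (4 * pi * h) powr (- 1 / 2) * exp (- (t - \<mu>)\<^sup>2 / (4 * h))"
    for \<mu> t
    using h by (simp add: normal_density_def powr_minus_divide powr_half_sqrt)
  have "iso_normal_density (sqrt (2 * h)) c y =
      ((4 * pi * h) powr (- 1 / 2)) ^ DIM('a) * exp (\<Sum>b\<in>Basis. - (y \<bullet> b - c \<bullet> b)\<^sup>2 / (4 * h))"
    unfolding iso_normal_density_def density by (simp add: prod.distrib exp_sum)
  also have "((4 * pi * h) powr (- 1 / 2)) ^ DIM('a) = (4 * pi * h) powr (- real DIM('a) / 2)"
    using h by (simp add: powr_realpow[symmetric] powr_powr)
  also have "(\<Sum>b\<in>Basis. - (y \<bullet> b - c \<bullet> b)\<^sup>2 / (4 * h)) = - (norm (y - c))\<^sup>2 / (4 * h)"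
    by (simp add: norm_power2_eq_sum_Basis inner_diff_left sum_divide_distrib[symmetric] sum_negf)
  finally show ?thesis .
qed

lemma nn_integral_prod_Basis:
  fixes f :: "'a::euclidean_space \<Rightarrow> real \<Rightarrow> real"
  assumes "\<And>b. f b \<in> borel_measurable borel" and "\<And>b t. 0 \<le> f b t"
  shows "(\<integral>\<^sup>+ y. ennreal (\<Prod>b\<in>Basis. f b (y \<bullet> b)) \<partial>lborel) =
    (\<Prod>b\<in>Basis. \<integral>\<^sup>+ t. ennreal (f b t) \<partial>lborel)"
proof -
  have "ennreal (\<Prod>b\<in>Basis. f b (y \<bullet> b)) = (\<Prod>b\<in>Basis. ennreal (f b (y \<bullet> b)))" for y
    using assms(2) by (simp add: prod_ennreal)
  moreover have "(\<integral>\<^sup>+ y. (\<Prod>b\<in>Basis. ennreal (f b (y \<bullet> b))) \<partial>lborel) =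
      (\<Prod>b\<in>Basis. \<integral>\<^sup>+ t. ennreal (f b t) \<partial>lborel)"
    by (rule nn_integral_lborel_prod) (simp_all add: assms)
  ultimately show ?thesis
    by simp
qed

lemma nn_integral_normal_density:
  "0 < s \<Longrightarrow> (\<integral>\<^sup>+ t. ennreal (normal_density \<mu> s t) \<partial>lborel) = 1"
  by (subst nn_integral_eq_integral) auto

lemma nn_integral_normal_second_moment:
  assumes "0 < s"
  shows "(\<integral>\<^sup>+ t. ennreal (normal_density \<mu> s t * (t - \<mu>)\<^sup>2) \<partial>lborel) = ennreal (s\<^sup>2)"
proof -
  have "has_bochner_integral lborel (\<lambda>t. normal_density \<mu> s t * (t - \<mu>)\<^sup>2) (s\<^sup>2)"
    using normal_moment_even[OF assms, of \<mu> 1] assms by simp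
  then show ?thesis
    by (subst nn_integral_eq_integral) (auto simp: has_bochner_integral_iff)
qed

lemma has_bochner_integral_iso_normal_density:
  assumes "0 < s"
  shows "has_bochner_integral lborel (iso_normal_density s c) 1"
proof (rule has_bochner_integral_nn_integral)
  show "(\<integral>\<^sup>+ y. ennreal (iso_normal_density s c y) \<partial>lborel) = ennreal 1"
    unfolding iso_normal_density_def
    by (subst nn_integral_prod_Basis) (simp_all add: nn_integral_normal_density[OF assms])
qed (simp_all add: iso_normal_density_nonneg)

lemma nn_integral_iso_normal_coordinate_moment:
  fixes c j :: "'a::euclidean_space"
  assumes "0 < s" and j: "j \<in> Basis"
  shows "(\<integral>\<^sup>+ y. ennreal (iso_normal_density s c y * ((y - c) \<bullet> j)\<^sup>2) \<partial>lborel) = ennreal (s\<^sup>2)"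
proof -
  define f where "f b t = normal_density (c \<bullet> b) s t * (if b = j then (t - c \<bullet> b)\<^sup>2 else 1)" for b t
  have "iso_normal_density s c y * ((y - c) \<bullet> j)\<^sup>2 = (\<Prod>b\<in>Basis. f b (y \<bullet> b))" for y
    using j by (simp add: f_def iso_normal_density_def prod.distrib inner_diff_left)
  moreover have "(\<integral>\<^sup>+ t. ennreal (f b t) \<partial>lborel) = (if b = j then ennreal (s\<^sup>2) else 1)" for b
    using assms by (simp add: f_def nn_integral_normal_density nn_integral_normal_second_moment)
  moreover have "f b \<in> borel_measurable borel" for b
    unfolding f_def by measurable
  moreover have "0 \<le> f b t" for b t
    by (simp add: f_def)
  ultimately show ?thesis
    using j by (simp add: nn_integral_prod_Basis)
qed

lemma has_bochner_integral_iso_normal_second_moment: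
  fixes c :: "'a::euclidean_space"
  assumes "0 < s"
  shows "has_bochner_integral lborel (\<lambda>y. iso_normal_density s c y * (norm (y - c))\<^sup>2) (real DIM('a) * s\<^sup>2)"
proof (rule has_bochner_integral_nn_integral)
  have "ennreal (iso_normal_density s c y * (norm (y - c))\<^sup>2) =
      (\<Sum>j\<in>Basis. ennreal (iso_normal_density s c y * ((y - c) \<bullet> j)\<^sup>2))" for y
    by (simp add: norm_power2_eq_sum_Basis sum_distrib_left sum_ennreal iso_normal_density_nonneg)
  then have "(\<integral>\<^sup>+ y. ennreal (iso_normal_density s c y * (norm (y - c))\<^sup>2) \<partial>lborel) =
      (\<Sum>j\<in>Basis. \<integral>\<^sup>+ y. ennreal (iso_normal_density s c y * ((y - c) \<bullet> j)\<^sup>2) \<partial>lborel)"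
    by (simp add: nn_integral_sum)
  also have "\<dots> = ennreal (real DIM('a) * s\<^sup>2)"
    using assms by (simp add: nn_integral_iso_normal_coordinate_moment ennreal_mult' ennreal_of_nat_eq_real_of_nat)
  finally show "(\<integral>\<^sup>+ y. ennreal (iso_normal_density s c y * (norm (y - c))\<^sup>2) \<partial>lborel) =
      ennreal (real DIM('a) * s\<^sup>2)" .
qed (simp_all add: iso_normal_density_nonneg)

lemma iso_normal_expectation_lower_bound:
  fixes c :: "'a::euclidean_space" and \<phi> :: "'a \<Rightarrow> real"
  assumes s: "0 < s" and \<phi>_meas: "\<phi> \<in> borel_measurable lebesgue"
    and \<phi>_nonneg: "\<And>y. 0 \<le> \<phi> y" and \<phi>_le_1: "\<And>y. \<phi> y \<le> 1"
    and \<phi>_lower: "\<And>y. A - k * (norm (y - c))\<^sup>2 \<le> \<phi> y"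
  shows "A - k * (real DIM('a) * s\<^sup>2) \<le> integral\<^sup>L lebesgue (\<lambda>y. iso_normal_density s c y * \<phi> y)"
proof -
  let ?G = "iso_normal_density s c"
  let ?lower = "\<lambda>y. A * ?G y - k * (?G y * (norm (y - c))\<^sup>2)"
  have "has_bochner_integral lborel ?lower (A * 1 - k * (real DIM('a) * s\<^sup>2))"
    using s by (intro has_bochner_integral_diff has_bochner_integral_mult_right
        has_bochner_integral_iso_normal_density has_bochner_integral_iso_normal_second_moment)
  then have lower: "integrable lebesgue ?lower" "integral\<^sup>L lebesgue ?lower = A - k * (real DIM('a) * s\<^sup>2)"
    by (simp_all add: has_bochner_integral_iff integrable_completion integral_completion)
  have "integrable lebesgue ?G"
    using has_bochner_integral_iso_normal_density[OF s, of c]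
    by (simp add: has_bochner_integral_iff integrable_completion)
  moreover have "?G \<in> borel_measurable lebesgue"
    by (rule measurable_completion) simp
  then have "(\<lambda>y. ?G y * \<phi> y) \<in> borel_measurable lebesgue"
    using \<phi>_meas by (rule borel_measurable_times)
  ultimately have "integrable lebesgue (\<lambda>y. ?G y * \<phi> y)"
    by (rule Bochner_Integration.integrable_bound)
      (simp add: \<phi>_nonneg \<phi>_le_1 iso_normal_density_nonneg mult_left_le)
  moreover have "?lower y \<le> ?G y * \<phi> y" for y
    using mult_left_mono[OF \<phi>_lower iso_normal_density_nonneg] by (simp add: algebra_simps)
  ultimately have "integral\<^sup>L lebesgue ?lower \<le> integral\<^sup>L lebesgue (\<lambda>y. ?G y * \<phi> y)"
    using lower(1) by (intro integral_mono)
  then show ?thesis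
    using lower(2) by simp
qed

section \<open>Subgradient inequalities\<close>

lemma lipschitz_bound_nonneg:
  fixes g :: "'a::euclidean_space \<Rightarrow> real"
  assumes "\<forall>x y. \<bar>g x - g y\<bar> \<le> L * norm (x - y)"
  shows "0 \<le> L"
proof -
  obtain b :: 'a where "b \<in> Basis"
    using nonempty_Basis by blast
  with assms[rule_format, of b 0] show ?thesis
    by (simp add: zero_le_mult_iff order_trans[OF abs_ge_zero])
qed

lemma superdiff_near_gradient:
  fixes f g :: "'a::euclidean_space \<Rightarrow> real"
  assumes f_grad: "(f has_derivative (\<lambda>u. G \<bullet> u)) (at x)"
    and g_lip: "\<forall>x y. \<bar>g x - g y\<bar> \<le> L * norm (x - y)"
    and w: "w \<in> superdiff (\<lambda>z. f z + g z) x"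
  shows "norm (w - G) \<le> L"
proof -
  define e where "e = G - w"
  have quot_le: "(f (x + t *\<^sub>R e) - f x) / t \<le> w \<bullet> e + L * norm e" if "0 < t" for t
  proof -
    have "f (x + t *\<^sub>R e) + g (x + t *\<^sub>R e) \<le> f x + g x + t * (w \<bullet> e)"
      using w unfolding superdiff_def by (auto dest: spec[of _ "x + t *\<^sub>R e"])
    moreover have "- (L * (t * norm e)) \<le> g (x + t *\<^sub>R e) - g x"
      using g_lip[rule_format, of "x + t *\<^sub>R e" x] that by simp
    ultimately show ?thesis
      using that by (simp add: divide_le_eq algebra_simps)
  qed
  have "((\<lambda>t. x + t *\<^sub>R e) has_derivative (\<lambda>t. t *\<^sub>R e)) (at 0 within {0<..})"
    by (auto intro!: derivative_eq_intros)
  moreover have "(f has_derivative (\<lambda>u. G \<bullet> u)) (at (x + 0 *\<^sub>R e))"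
    using f_grad by simp
  ultimately have "((\<lambda>t. f (x + t *\<^sub>R e)) has_derivative (\<lambda>t. G \<bullet> (t *\<^sub>R e))) (at 0 within {0<..})"
    by (rule has_derivative_compose)
  moreover have "(\<lambda>t. G \<bullet> (t *\<^sub>R e)) = (*) (G \<bullet> e)"
    by (auto simp: fun_eq_iff)
  ultimately have "((\<lambda>t. f (x + t *\<^sub>R e)) has_real_derivative G \<bullet> e) (at 0 within {0<..})"
    by (simp add: has_field_derivative_def)
  then have "((\<lambda>t. (f (x + t *\<^sub>R e) - f x) / t) \<longlongrightarrow> G \<bullet> e) (at_right 0)"
    by (simp add: has_field_derivative_iff)
  then have "G \<bullet> e \<le> w \<bullet> e + L * norm e"
    by (rule tendsto_upperbound) (auto intro: eventually_mono[OF eventually_at_right_less] quot_le)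
  then have "norm e * norm e \<le> L * norm e"
    by (simp add: e_def power2_norm_eq_inner inner_diff_left flip: power2_eq_square)
  then have "norm e \<le> L"
    using lipschitz_bound_nonneg[OF g_lip] by (cases "e = 0") (auto simp: mult_le_cancel_right)
  then show ?thesis
    by (simp add: e_def norm_minus_commute)
qed

lemma strongly_concave_superdiff_le:
  fixes F :: "'a::euclidean_space \<Rightarrow> real"
  assumes strong: "\<forall>x y lam. 0 < lam \<and> lam < 1 \<longrightarrow>
        F (lam *\<^sub>R x + (1 - lam) *\<^sub>R y) \<ge> lam * F x + (1 - lam) * F y + m / 2 * lam * (1 - lam) * (norm (x - y))\<^sup>2"
    and w: "w \<in> superdiff F y"
  shows "F x \<le> F y + w \<bullet> (x - y) - m / 2 * (norm (x - y))\<^sup>2"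
proof -
  let ?D = "(norm (x - y))\<^sup>2"
  have "F x - F y + m / 2 * (1 - l) * ?D \<le> w \<bullet> (x - y)" if "0 < l" "l < 1" for l
  proof -
    have "l * F x + (1 - l) * F y + m / 2 * l * (1 - l) * ?D \<le> F (l *\<^sub>R x + (1 - l) *\<^sub>R y)"
      using strong that by blast
    also have "\<dots> \<le> F y + w \<bullet> (l *\<^sub>R (x - y))"
      using w unfolding superdiff_def by (auto dest: spec[of _ "l *\<^sub>R x + (1 - l) *\<^sub>R y"] simp: algebra_simps)
    finally have "l * (F x - F y + m / 2 * (1 - l) * ?D) \<le> l * (w \<bullet> (x - y))"
      by (simp add: algebra_simps)
    with \<open>0 < l\<close> show ?thesis
      by simp
  qed
  then have ev: "eventually (\<lambda>l. F x - F y + m / 2 * (1 - l) * ?D \<le> w \<bullet> (x - y)) (at_right 0)"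
    unfolding eventually_at_right_field by (intro exI[of _ 1]) auto
  have lim: "((\<lambda>l. F x - F y + m / 2 * (1 - l) * ?D) \<longlongrightarrow> F x - F y + m / 2 * (1 - 0) * ?D) (at_right 0)"
    by (intro tendsto_intros)
  have "F x - F y + m / 2 * (1 - 0) * ?D \<le> w \<bullet> (x - y)"
    by (rule tendsto_upperbound[OF lim ev]) simp
  then show ?thesis
    by simp
qed

section \<open>The acceptance probability of subgradient MALA\<close>

lemma mala_exponent_identity:
  fixes a b u :: "'a::real_inner"
  assumes "0 < h"
  shows "b \<bullet> u - ((norm (u + h *\<^sub>R b))\<^sup>2 - (norm (u - h *\<^sub>R a))\<^sup>2) / (4 * h)
       = - h * (norm (a - b))\<^sup>2 / 4 - (a - b) \<bullet> (u - h *\<^sub>R a) / 2"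
proof -
  have expand_b: "(norm (u + h *\<^sub>R b))\<^sup>2 = u \<bullet> u + 2 * h * (u \<bullet> b) + h\<^sup>2 * (b \<bullet> b)"
    unfolding power2_norm_eq_inner by (simp add: inner_add_left inner_add_right inner_commute power2_eq_square algebra_simps)
  have expand_a: "(norm (u - h *\<^sub>R a))\<^sup>2 = u \<bullet> u - 2 * h * (u \<bullet> a) + h\<^sup>2 * (a \<bullet> a)"
    unfolding power2_norm_eq_inner by (simp add: inner_diff_left inner_diff_right inner_commute power2_eq_square algebra_simps)
  have expand_ab: "(norm (a - b))\<^sup>2 = a \<bullet> a - 2 * (a \<bullet> b) + b \<bullet> b"
    unfolding power2_norm_eq_inner by (simp add: inner_diff_left inner_diff_right inner_commute algebra_simps)
  have expand_inner: "(a - b) \<bullet> (u - h *\<^sub>R a) = u \<bullet> a - u \<bullet> b - h * (a \<bullet> a) + h * (a \<bullet> b)"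
    by (simp add: inner_diff_left inner_diff_right inner_commute algebra_simps)
  show ?thesis
    unfolding expand_a expand_b expand_ab expand_inner
    using assms by (simp add: inner_commute[of b u] field_simps power2_eq_square)
qed

lemma mult_le_weighted_squares:
  fixes x y e :: real
  assumes "0 < e"
  shows "x * y \<le> e / 2 * x\<^sup>2 + y\<^sup>2 / (2 * e)"
proof -
  have "0 \<le> (e * x - y)\<^sup>2 / (2 * e)"
    using assms by simp
  also have "\<dots> = e / 2 * x\<^sup>2 - x * y + y\<^sup>2 / (2 * e)"
    using assms by (simp add: power2_eq_square field_simps)
  finally show ?thesis
    by simp
qed

lemma mala_exponent_scalar_bound:
  fixes h d m M L E U Z ez :: real
  assumes h: "0 < h" and d: "1 \<le> d" and m: "0 < m"
    and step_M: "200 * h * d * (M / m) * M \<le> 1" and step_L: "200 * h * d * L\<^sup>2 \<le> 1"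
    and E: "0 \<le> E" "E \<le> M * U + 2 * L" and U: "0 \<le> U" and Z: "0 \<le> Z" and ez: "ez \<le> E * Z"
  shows "- 6/100 - 21/800 * (Z\<^sup>2 / (h * d)) \<le> m / 2 * U\<^sup>2 - h * E\<^sup>2 / 4 - ez / 2"
proof -
  \<comment> \<open>AM-GM with weight m lets the strong-concavity term m/2 U^2 absorb the cross term M U Z;
    AM-GM with weight 20 h d splits L Z; the step-size conditions bound what remains.\<close>
  define W where "W = Z\<^sup>2 / (h * d)"
  have hd: "0 < h * d"
    using h d by simp
  have le_times_d: "t \<le> t * d" if "0 \<le> t" for t
    using mult_left_mono[OF d that] by simp
  have hM: "200 * (h * M\<^sup>2) * d \<le> m"
    using step_M m by (simp add: field_simps power2_eq_square)
  have "E\<^sup>2 \<le> (M * U + 2 * L)\<^sup>2"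
    using E by (intro power_mono) auto
  also have "\<dots> \<le> 2 * (M * U)\<^sup>2 + 8 * L\<^sup>2"
    using mult_le_weighted_squares[of 1 "M * U" "2 * L"] by (simp add: power2_eq_square algebra_simps)
  finally have "h * E\<^sup>2 \<le> h * (2 * (M * U)\<^sup>2 + 8 * L\<^sup>2)"
    using h by (intro mult_left_mono) auto
  then have "h * E\<^sup>2 \<le> 2 * (h * M\<^sup>2 * U\<^sup>2) + 8 * (h * L\<^sup>2)"
    by (simp add: power_mult_distrib algebra_simps)
  moreover have "200 * (h * M\<^sup>2 * U\<^sup>2) \<le> m * U\<^sup>2"
  proof -
    have "200 * (h * M\<^sup>2) \<le> 200 * (h * M\<^sup>2) * d"
      using h by (intro le_times_d) simp
    with hM have "200 * (h * M\<^sup>2) * U\<^sup>2 \<le> m * U\<^sup>2"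
      by (intro mult_right_mono) auto
    then show ?thesis
      by (simp add: algebra_simps)
  qed
  moreover have "200 * (h * L\<^sup>2) \<le> 1"
  proof -
    have "200 * (h * L\<^sup>2) \<le> 200 * (h * L\<^sup>2) * d"
      using h by (intro le_times_d) simp
    then show ?thesis
      using step_L by (simp add: algebra_simps)
  qed
  moreover have "ez \<le> M * U * Z + 2 * (L * Z)"
    using ez mult_right_mono[OF E(2) Z] by (simp add: algebra_simps)
  moreover have "2 * (M * U * Z) \<le> m * U\<^sup>2 + M\<^sup>2 / m * Z\<^sup>2"
    using mult_le_weighted_squares[OF m, of U "M * Z"] m by (simp add: power_mult_distrib field_simps)
  moreover have "200 * (M\<^sup>2 / m * Z\<^sup>2) \<le> W"
  proof -
    have "200 * (h * M\<^sup>2) * d * Z\<^sup>2 \<le> m * Z\<^sup>2"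
      using hM by (intro mult_right_mono) auto
    then show ?thesis
      using m hd by (simp add: W_def field_simps)
  qed
  moreover have "40 * (L * Z) \<le> 400 * (h * d * L\<^sup>2) + W"
    using mult_le_weighted_squares[of "20 * h * d" L Z] hd by (simp add: W_def field_simps)
  moreover have "200 * (h * d * L\<^sup>2) \<le> 1"
    using step_L by (simp add: algebra_simps)
  moreover have "0 \<le> m * U\<^sup>2"
    using m by simp
  moreover have "m / 2 * U\<^sup>2 = (m * U\<^sup>2) / 2"
    by simp
  ultimately show ?thesis
    unfolding W_def[symmetric] by linarith
qed

lemma mala_q_eq_iso_normal_density:
  assumes "0 < h"
  shows "mala_q h v x = iso_normal_density (sqrt (2 * h)) (x + h *\<^sub>R v x)"
  unfolding fun_eq_iff mala_q_def iso_normal_density_sqrt[OF assms] by (simp add: algebra_simps)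

lemma mala_alpha_measurableI:
  fixes p :: "'a::euclidean_space \<Rightarrow> real"
  assumes "0 < h" and v: "v \<in> borel_measurable lebesgue" and p: "p \<in> borel_measurable lebesgue"
  shows "mala_alpha p h v x \<in> borel_measurable lebesgue"
proof -
  define K where "K = (4 * pi * h) powr (- real DIM('a) / 2)"
  have kernel: "continuous_on UNIV (\<lambda>w::'a. K * exp (- (norm w)\<^sup>2 / (4 * h)))"
    by (intro continuous_intros) (use \<open>0 < h\<close> in auto)
  have id: "(\<lambda>y::'a. y) \<in> borel_measurable lebesgue"
    using id_borel_measurable_lebesgue by (simp add: id_def)
  have "(\<lambda>y. mala_q h v x y) \<in> borel_measurable lebesgue"
    using borel_measurable_continuous_on[OF kernel, of "\<lambda>y. y - x - h *\<^sub>R v x"] id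
    unfolding mala_q_def K_def by measurable
  moreover have "(\<lambda>y. mala_q h v y x) \<in> borel_measurable lebesgue"
    using borel_measurable_continuous_on[OF kernel, of "\<lambda>y. x - y - h *\<^sub>R v y"] id v
    unfolding mala_q_def K_def by measurable
  ultimately show ?thesis
    using p unfolding mala_alpha_def by measurable
qed

lemma mala_alpha_le_one: "mala_alpha p h v x y \<le> 1"
  by (simp add: mala_alpha_def)

locale mala_setting =
  fixes p :: "'a::euclidean_space \<Rightarrow> real"
    and f g :: "'a \<Rightarrow> real"
    and gf v :: "'a \<Rightarrow> 'a"
    and M L m h :: real
  assumes p_pos: "\<forall>x. p x > 0"
    and logp: "\<forall>x. ln (p x) = f x + g x"
    and f_grad: "\<forall>x. (f has_derivative (\<lambda>u. gf x \<bullet> u)) (at x)"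
    and f_smooth: "\<forall>x y. norm (gf x - gf y) \<le> M * norm (x - y)"
    and g_lip: "\<forall>x y. \<bar>g x - g y\<bar> \<le> L * norm (x - y)"
    and m_pos: "m > 0"
    and strong: "\<forall>x y lam. 0 < lam \<and> lam < 1 \<longrightarrow>
        ln (p (lam *\<^sub>R x + (1 - lam) *\<^sub>R y)) \<ge>
          lam * ln (p x) + (1 - lam) * ln (p y) + m / 2 * lam * (1 - lam) * (norm (x - y))\<^sup>2"
    and v_sel: "\<forall>x. v x \<in> superdiff (\<lambda>z. ln (p z)) x"
    and h_pos: "0 < h"
    and h_le1: "200 * h * real DIM('a) * (M / m) * M \<le> 1"
    and h_le2: "200 * h * real DIM('a) * L\<^sup>2 \<le> 1"
begin

lemma continuous_on_ln_p: "continuous_on UNIV (\<lambda>z. ln (p z))"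
proof -
  have "continuous_on UNIV f"
    using f_grad by (intro continuous_at_imp_continuous_on ballI has_derivative_continuous) auto
  moreover have "lipschitz_on L UNIV g"
    using g_lip lipschitz_bound_nonneg[OF g_lip] by (auto simp: lipschitz_on_def dist_norm dist_real_def)
  ultimately show ?thesis
    using logp by (simp add: continuous_on_add lipschitz_on_continuous_on)
qed

lemma mala_alpha_measurable: "mala_alpha p h v x \<in> borel_measurable lebesgue"
proof (rule mala_alpha_measurableI[OF h_pos])
  show "v \<in> borel_measurable lebesgue"
    using continuous_on_ln_p v_sel by (rule superdiff_selection_measurable)
  have "(\<lambda>z. exp (ln (p z))) \<in> borel_measurable borel"
    using continuous_on_ln_p by (intro borel_measurable_continuous_onI continuous_on_exp)
  then have "p \<in> borel_measurable borel"
    using p_pos by simp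
  then show "p \<in> borel_measurable lebesgue"
    by (intro measurable_completion) simp
qed

lemma norm_v_diff_le: "norm (v x - v y) \<le> M * norm (x - y) + 2 * L"
proof -
  have superdiff_f_g: "v z \<in> superdiff (\<lambda>z. f z + g z) z" for z
    using v_sel logp by simp
  have "norm (v x - v y) \<le> norm (v x - gf x) + norm (gf x - gf y) + norm (gf y - v y)"
    using norm_triangle_ineq[of "v x - gf x" "gf x - v y"] norm_triangle_ineq[of "gf x - gf y" "gf y - v y"]
    by simp
  also have "\<dots> \<le> L + M * norm (x - y) + L"
    using superdiff_near_gradient[OF _ g_lip superdiff_f_g] f_grad f_smooth
    by (intro add_mono) (auto simp: norm_minus_commute)
  finally show ?thesis
    by simp
qed

lemma mala_ratio_eq_exp:
  "p y * mala_q h v y x / (p x * mala_q h v x y) =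
    exp (ln (p y) - ln (p x) - ((norm (x - y - h *\<^sub>R v y))\<^sup>2 - (norm (y - x - h *\<^sub>R v x))\<^sup>2) / (4 * h))"
proof -
  define K where "K = (4 * pi * h) powr (- real DIM('a) / 2)"
  define A where "A = (norm (x - y - h *\<^sub>R v y))\<^sup>2 / (4 * h)"
  define B where "B = (norm (y - x - h *\<^sub>R v x))\<^sup>2 / (4 * h)"
  have "0 < K"
    using h_pos by (simp add: K_def)
  have "p y * mala_q h v y x / (p x * mala_q h v x y) =
      (exp (ln (p y)) * (K * exp (- A))) / (exp (ln (p x)) * (K * exp (- B)))"
    using p_pos by (simp add: mala_q_def K_def A_def B_def)
  also have "\<dots> = exp (ln (p y) - A) / exp (ln (p x) - B)"
    using \<open>0 < K\<close> by (simp add: exp_diff exp_minus field_simps)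
  also have "\<dots> = exp (ln (p y) - ln (p x) - (A - B))"
    by (simp add: exp_diff[symmetric] algebra_simps)
  finally show ?thesis
    by (simp add: A_def B_def diff_divide_distrib)
qed

lemma mala_log_ratio_lower_bound:
  "- 6/100 - 21/800 * ((norm (y - (x + h *\<^sub>R v x)))\<^sup>2 / (h * DIM('a)))
    \<le> ln (p y) - ln (p x) - ((norm (x - y - h *\<^sub>R v y))\<^sup>2 - (norm (y - x - h *\<^sub>R v x))\<^sup>2) / (4 * h)"
proof -
  define u where "u = y - x"
  have "ln (p x) \<le> ln (p y) + v y \<bullet> (x - y) - m / 2 * (norm (x - y))\<^sup>2"
    using strong v_sel by (intro strongly_concave_superdiff_le[where F="\<lambda>z. ln (p z)"]) auto
  then have "v y \<bullet> u + m / 2 * (norm u)\<^sup>2 \<le> ln (p y) - ln (p x)"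
    by (simp add: u_def inner_diff_right norm_minus_commute)
  moreover have "- 6/100 - 21/800 * ((norm (u - h *\<^sub>R v x))\<^sup>2 / (h * DIM('a))) \<le>
      m / 2 * (norm u)\<^sup>2 - h * (norm (v x - v y))\<^sup>2 / 4 - (v x - v y) \<bullet> (u - h *\<^sub>R v x) / 2"
    using h_pos m_pos h_le1 h_le2 norm_v_diff_le[of x y] norm_cauchy_schwarz
    by (intro mala_exponent_scalar_bound) (auto simp: u_def norm_minus_commute)
  moreover have "x - y - h *\<^sub>R v y = - (u + h *\<^sub>R v y)"
    by (simp add: u_def algebra_simps)
  then have "norm (x - y - h *\<^sub>R v y) = norm (u + h *\<^sub>R v y)"
    by (simp only: norm_minus_cancel)
  moreover have "y - x - h *\<^sub>R v x = u - h *\<^sub>R v x" "y - (x + h *\<^sub>R v x) = u - h *\<^sub>R v x"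
    by (simp_all add: u_def algebra_simps)
  ultimately show ?thesis
    using mala_exponent_identity[OF h_pos, of "v y" u "v x"] by (simp only:)
qed

lemma mala_alpha_lower_bound:
  "47/50 - 21 / (800 * h * DIM('a)) * (norm (y - (x + h *\<^sub>R v x)))\<^sup>2 \<le> mala_alpha p h v x y"
proof -
  define R where "R = - 6/100 - 21/800 * ((norm (y - (x + h *\<^sub>R v x)))\<^sup>2 / (h * DIM('a)))"
  have "0 \<le> (norm (y - (x + h *\<^sub>R v x)))\<^sup>2 / (h * DIM('a))"
    using h_pos by simp
  then have "R \<le> 0"
    unfolding R_def by linarith
  have "1 + R \<le> exp R"
    by (rule exp_ge_add_one_self)
  also have "\<dots> \<le> p y * mala_q h v y x / (p x * mala_q h v x y)"
    unfolding mala_ratio_eq_exp R_def using mala_log_ratio_lower_bound by simp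
  finally show ?thesis
    using \<open>R \<le> 0\<close> by (simp add: mala_alpha_def R_def field_simps)
qed

lemma mala_alpha_nonneg: "0 \<le> mala_alpha p h v x y"
  using p_pos h_pos by (simp add: mala_alpha_def mala_q_def less_imp_le)

lemma mala_accept_lower_bound: "71/80 \<le> mala_accept p h v x"
proof -
  let ?k = "21 / (800 * h * DIM('a))"
  have "47/50 - ?k * (real DIM('a) * (sqrt (2 * h))\<^sup>2) \<le> mala_accept p h v x"
    unfolding mala_accept_def mala_q_eq_iso_normal_density[OF h_pos]
    by (intro iso_normal_expectation_lower_bound mala_alpha_measurable mala_alpha_nonneg
        mala_alpha_le_one mala_alpha_lower_bound) (simp add: h_pos)
  then show ?thesis
    using h_pos by (simp add: field_simps)
qed

end

theorem mainTheorem6: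
  fixes p :: "'a::euclidean_space \<Rightarrow> real"
    and f g :: "'a \<Rightarrow> real"
    and gf v :: "'a \<Rightarrow> 'a"
    and M L m h :: real
  assumes p_pos: "\<forall>x. p x > 0"
    and p_prob: "(p has_integral 1) UNIV"
    and logp: "\<forall>x. ln (p x) = f x + g x"
    and f_concave: "concave_on UNIV f"
    and f_grad: "\<forall>x. (f has_derivative (\<lambda>u. gf x \<bullet> u)) (at x)"
    and f_smooth: "\<forall>x y. norm (gf x - gf y) \<le> M * norm (x - y)"
    and g_lip: "\<forall>x y. \<bar>g x - g y\<bar> \<le> L * norm (x - y)"
    and m_pos: "m > 0"
    and strong: "\<forall>x y lam. 0 < lam \<and> lam < 1 \<longrightarrow>
        ln (p (lam *\<^sub>R x + (1 - lam) *\<^sub>R y)) \<ge>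
          lam * ln (p x) + (1 - lam) * ln (p y) + m / 2 * lam * (1 - lam) * (norm (x - y))\<^sup>2"
    and v_sel: "\<forall>x. v x \<in> superdiff (\<lambda>z. ln (p z)) x"
    and h_pos: "0 < h"
    and h_le1: "200 * h * real DIM('a) * (M / m) * M \<le> 1"
    and h_le2: "200 * h * real DIM('a) * L\<^sup>2 \<le> 1"
  shows "(INF x. mala_accept p h v x) > 13 / 20"
proof -
  interpret mala_setting p f g gf v M L m h
    by unfold_locales fact+
  have "71/80 \<le> (INF x. mala_accept p h v x)"
    by (rule cINF_greatest) (simp, rule mala_accept_lower_bound)
  then show ?thesis
    by simp
qed

end
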